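(* For every hereditary class property $\Pi$, we have $(\Pi^+)^+=\Pi^+$ and $(\Pi^\ast)^+=\Pi^\ast$.
   Context: Graphs are finite and simple. A hereditary class is a class closed under isomorphism and induced subgraphs; a hereditary class property is a set $\Pi$ of hereditary classes such that $\mathscr C\in\Pi$, $\mathscr D$ hereditary, $\mathscr D\subseteq\mathscr C$ imply $\mathscr D\in\Pi$. For non-decreasing $f:\mathbb N\to\mathbb N$ and positive integer $p$, $\mathscr C$ has an $f$-bounded $\Pi$-decomposition with parameter $p$ if there is $\mathscr D_p\in\Pi$ such that every $G\in\mathscr C$ has a partition $V_1,\dots,V_N$ of $V(G)$ with $N\le f(|G|)$ and $G[V_{i_1}\cup\dots\cup V_{i_p}]\in\mathscr D_p$ for all $i_1,\dots,i_p\in[N]$. $\Pi^+$ (resp. $\Pi^\ast$) is the set of hereditary classes that, for every positive integer $p$, have an $f$-bounded $\Pi$-decomposition with parameter $p$ for some constant function $f$ (resp. some non-decreasing $f$ with $f(n)=n^{o(1)}$). *)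

theory Defs
  imports Complex_Main
begin

text \<open>Finite simple graphs, represented with vertices drawn from nat
  (every finite graph is isomorphic to such a graph). A graph is a pair
  (V, E) of a vertex set and a set of 2-element edges.\<close>

type_synonym graph = "nat set \<times> nat set set"

definition verts :: "graph \<Rightarrow> nat set" where "verts G = fst G"
definition edges :: "graph \<Rightarrow> nat set set" where "edges G = snd G"

definition wf_graph :: "graph \<Rightarrow> bool" where
  "wf_graph G \<longleftrightarrow> finite (verts G) \<and>
     (\<forall>e\<in>edges G. \<exists>u v. u \<in> verts G \<and> v \<in> verts G \<and> u \<noteq> v \<and> e = {u, v})"

definition induced :: "graph \<Rightarrow> nat set \<Rightarrow> graph" where
  "induced G S = (verts G \<inter> S, {e \<in> edges G. e \<subseteq> S})"

definition graph_iso :: "graph \<Rightarrow> graph \<Rightarrow> bool" where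
  "graph_iso G H \<longleftrightarrow> (\<exists>f. bij_betw f (verts G) (verts H) \<and>
     (\<forall>u\<in>verts G. \<forall>v\<in>verts G. {u, v} \<in> edges G \<longleftrightarrow> {f u, f v} \<in> edges H))"

definition hereditary :: "graph set \<Rightarrow> bool" where
  "hereditary C \<longleftrightarrow> (\<forall>G\<in>C. wf_graph G) \<and>
     (\<forall>G\<in>C. \<forall>H. wf_graph H \<and> graph_iso G H \<longrightarrow> H \<in> C) \<and>
     (\<forall>G\<in>C. \<forall>S. induced G S \<in> C)"

definition hereditary_class_property :: "graph set set \<Rightarrow> bool" where
  "hereditary_class_property P \<longleftrightarrow> (\<forall>C\<in>P. hereditary C) \<and>
     (\<forall>C\<in>P. \<forall>D. hereditary D \<and> D \<subseteq> C \<longrightarrow> D \<in> P)"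

text \<open>C has an f-bounded P-decomposition with parameter p: partition into
  parts V 0, ..., V (N-1) (possibly empty), N <= f |G|, and the union of any p
  parts (repetitions allowed) induces a graph in a fixed class D_p in P.\<close>
definition has_decomp :: "graph set set \<Rightarrow> graph set \<Rightarrow> (nat \<Rightarrow> nat) \<Rightarrow> nat \<Rightarrow> bool" where
  "has_decomp P C f p \<longleftrightarrow> (\<exists>D\<in>P. \<forall>G\<in>C. \<exists>N Vp.
      N \<le> f (card (verts G)) \<and>
      (\<Union>i<N. Vp i) = verts G \<and>
      (\<forall>i<N. \<forall>j<N. i \<noteq> j \<longrightarrow> Vp i \<inter> Vp j = {}) \<and>
      (\<forall>idx. (\<forall>k<p. idx k < N) \<longrightarrow> induced G (\<Union>k<p. Vp (idx k)) \<in> D))"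

definition plus_prop :: "graph set set \<Rightarrow> graph set set" where
  "plus_prop P = {C. hereditary C \<and>
     (\<forall>p::nat. p \<ge> 1 \<longrightarrow> (\<exists>c::nat. has_decomp P C (\<lambda>_. c) p))}"

definition subpoly :: "(nat \<Rightarrow> nat) \<Rightarrow> bool" where
  "subpoly f \<longleftrightarrow> (\<forall>\<epsilon>::real. \<epsilon> > 0 \<longrightarrow>
     (\<forall>\<^sub>F n in sequentially. real (f n) \<le> real n powr \<epsilon>))"

definition star_prop :: "graph set set \<Rightarrow> graph set set" where
  "star_prop P = {C. hereditary C \<and>
     (\<forall>p::nat. p \<ge> 1 \<longrightarrow> (\<exists>f. mono f \<and> subpoly f \<and> has_decomp P C f p))}"

end

theory Submission
  imports Defs "HOL-Library.FuncSet"
begin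

(* Every hereditary class in a property Q lies in Q^+, being its own decomposition with a
   single part.  For the reverse inclusions, decompositions compose.  Let V_1, ..., V_N
   (N <= c) partition G so that any p parts induce a graph of D, and fix for every p-tuple S of
   indices a partition of G[V_S] into at most f(|G|) parts, any p of which induce a graph of the
   hereditary class D'.  Label each vertex by its part V_i together with, for every S, the index
   of its part in the partition of G[V_S].  The vertices of p label classes all lie in one
   G[V_S], and there in p of its parts, so by heredity they induce a graph of D'.  There are at
   most c (f(|G|) + 1)^(c^p) labels: a constant if f is constant, and again n^o(1) if f is. *)

lemma hereditary_induced: "hereditary C \<Longrightarrow> G \<in> C \<Longrightarrow> induced G X \<in> C"
  by (simp add: hereditary_def)

lemma verts_induced [simp]: "verts (induced G X) = verts G \<inter> X"
  by (simp add: induced_def verts_def)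

lemma induced_induced [simp]: "induced (induced G X) Y = induced G (X \<inter> Y)"
  unfolding induced_def verts_def edges_def by (auto simp: Int_assoc)

lemma induced_verts:
  assumes "wf_graph G"
  shows "induced G (verts G) = G"
proof -
  have "e \<subseteq> verts G" if "e \<in> edges G" for e
    using assms that unfolding wf_graph_def by fastforce
  then have "{e \<in> edges G. e \<subseteq> verts G} = edges G" by blast
  then show ?thesis by (simp add: induced_def verts_def edges_def)
qed

definition decomposition :: "nat \<Rightarrow> graph set \<Rightarrow> graph \<Rightarrow> nat \<Rightarrow> (nat \<Rightarrow> nat set) \<Rightarrow> bool" where
  "decomposition p D G N V \<longleftrightarrow> (\<Union>i<N. V i) = verts G \<and>
     (\<forall>i<N. \<forall>j<N. i \<noteq> j \<longrightarrow> V i \<inter> V j = {}) \<and>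
     (\<forall>idx. (\<forall>k<p. idx k < N) \<longrightarrow> induced G (\<Union>k<p. V (idx k)) \<in> D)"

lemma has_decomp_iff_decomposition:
  "has_decomp Q C f p \<longleftrightarrow>
     (\<exists>D\<in>Q. \<forall>G\<in>C. \<exists>N V. N \<le> f (card (verts G)) \<and> decomposition p D G N V)"
  unfolding has_decomp_def decomposition_def ..

lemma has_decomp_iff_singleton: "has_decomp Q C f p \<longleftrightarrow> (\<exists>D\<in>Q. has_decomp {D} C f p)"
  by (simp add: has_decomp_def)

lemma decomposition_single_part:
  assumes "wf_graph G" "G \<in> D" "p \<ge> 1"
  shows "decomposition p D G 1 (\<lambda>_. verts G)"
  using assms by (auto simp: decomposition_def induced_verts lessThan_empty_iff)

definition part_index :: "(nat \<Rightarrow> 'a set) \<Rightarrow> 'a \<Rightarrow> nat" where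
  "part_index V v = (LEAST i. v \<in> V i)"

lemma part_index_spec:
  assumes "v \<in> (\<Union>i<N. V i)"
  shows "part_index V v < N" "v \<in> V (part_index V v)"
proof -
  obtain i where "i < N" "v \<in> V i" using assms by blast
  then show "part_index V v < N" "v \<in> V (part_index V v)"
    unfolding part_index_def by (auto intro: LeastI Least_le[THEN le_less_trans])
qed

lemma decomposition_by_labels:
  fixes lab :: "nat \<Rightarrow> 'a"
  assumes fin: "finite (lab ` verts G)"
    and classes: "\<And>v. (\<forall>k<p. v k \<in> verts G) \<Longrightarrow>
        induced G {w \<in> verts G. \<exists>k<p. lab w = lab (v k)} \<in> D"
  shows "\<exists>V. decomposition p D G (card (lab ` verts G)) V"
proof -
  let ?L = "lab ` verts G"
  obtain h where h: "bij_betw h {..<card ?L} ?L"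
    using ex_bij_betw_nat_finite[OF fin] by (auto simp: atLeast0LessThan)
  define V where "V i = {w \<in> verts G. lab w = h i}" for i
  have "(\<Union>i<card ?L. V i) = verts G"
    using h unfolding V_def bij_betw_def by (force simp: image_iff)
  moreover have "V i \<inter> V j = {}" if "i < card ?L" "j < card ?L" "i \<noteq> j" for i j
    using h that unfolding V_def bij_betw_def inj_on_def by auto
  moreover have "induced G (\<Union>k<p. V (idx k)) \<in> D" if idx: "\<forall>k<p. idx k < card ?L" for idx
  proof -
    have "\<forall>k<p. \<exists>v\<in>verts G. lab v = h (idx k)"
      using h idx unfolding bij_betw_def by (metis imageE image_eqI lessThan_iff)
    then obtain v where v: "\<forall>k<p. v k \<in> verts G \<and> lab (v k) = h (idx k)" by metis
    then have "(\<Union>k<p. V (idx k)) = {w \<in> verts G. \<exists>k<p. lab w = lab (v k)}"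
      unfolding V_def by auto
    then show ?thesis using classes v by simp
  qed
  ultimately show ?thesis unfolding decomposition_def by blast
qed

(* Outside V_S the value part_index (U S) v is junk; replacing it by 0 keeps the labels in a
   finite set. *)
definition refined_label ::
    "nat \<Rightarrow> nat \<Rightarrow> (nat \<Rightarrow> nat set) \<Rightarrow> ((nat \<Rightarrow> nat) \<Rightarrow> nat \<Rightarrow> nat set) \<Rightarrow> nat
      \<Rightarrow> nat \<times> ((nat \<Rightarrow> nat) \<Rightarrow> nat)" where
  "refined_label p N V U v = (part_index V v,
     restrict (\<lambda>S. if v \<in> (\<Union>k<p. V (S k)) then part_index (U S) v else 0) ({..<p} \<rightarrow>\<^sub>E {..<N}))"

context
  fixes p N :: nat and G :: graph and V :: "nat \<Rightarrow> nat set" and D D' :: "graph set"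
    and M' :: "(nat \<Rightarrow> nat) \<Rightarrow> nat" and U :: "(nat \<Rightarrow> nat) \<Rightarrow> nat \<Rightarrow> nat set"
  assumes dec: "decomposition p D G N V"
    and dec_U: "\<And>S. S \<in> {..<p} \<rightarrow>\<^sub>E {..<N} \<Longrightarrow>
        decomposition p D' (induced G (\<Union>k<p. V (S k))) (M' S) (U S)"
begin

lemma cover_parts: "(\<Union>i<N. V i) = verts G"
  using dec by (simp add: decomposition_def)

lemma cover_refined_parts:
  assumes "S \<in> {..<p} \<rightarrow>\<^sub>E {..<N}"
  shows "(\<Union>j<M' S. U S j) = (\<Union>k<p. V (S k))"
proof -
  have "(\<Union>k<p. V (S k)) \<subseteq> verts G" using assms cover_parts by auto
  then show ?thesis using dec_U[OF assms] by (auto simp: decomposition_def)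
qed

lemma refined_label_range:
  assumes "\<And>S. S \<in> {..<p} \<rightarrow>\<^sub>E {..<N} \<Longrightarrow> M' S \<le> M"
  shows "refined_label p N V U ` verts G \<subseteq> {..<N} \<times> (({..<p} \<rightarrow>\<^sub>E {..<N}) \<rightarrow>\<^sub>E {..M})"
proof (intro image_subsetI)
  fix v assume "v \<in> verts G"
  then have "part_index V v < N" using cover_parts by (simp add: part_index_spec(1))
  moreover have "part_index (U S) v \<le> M"
    if "S \<in> {..<p} \<rightarrow>\<^sub>E {..<N}" "v \<in> (\<Union>k<p. V (S k))" for S
  proof -
    have "part_index (U S) v < M' S"
      using that cover_refined_parts by (simp add: part_index_spec(1))
    then show ?thesis using assms[OF that(1)] by simp
  qed
  ultimately show "refined_label p N V U v \<in> {..<N} \<times> (({..<p} \<rightarrow>\<^sub>E {..<N}) \<rightarrow>\<^sub>E {..M})"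
    unfolding refined_label_def by (simp add: restrict_PiE_iff)
qed

lemma refined_label_class_subset:
  assumes S: "S \<in> {..<p} \<rightarrow>\<^sub>E {..<N}"
    and v: "\<forall>k<p. v k \<in> verts G \<and> part_index V (v k) = S k"
  shows "{w \<in> verts G. \<exists>k<p. refined_label p N V U w = refined_label p N V U (v k)}
    \<subseteq> (\<Union>k<p. V (S k)) \<inter> (\<Union>k<p. U S (part_index (U S) (v k)))"
proof
  let ?VS = "\<Union>k<p. V (S k)"
  fix w assume "w \<in> {w \<in> verts G. \<exists>k<p. refined_label p N V U w = refined_label p N V U (v k)}"
  then obtain k where k: "k < p" "w \<in> verts G"
    and same_label: "refined_label p N V U w = refined_label p N V U (v k)"
    by blast
  have vk: "v k \<in> verts G" "part_index V (v k) = S k" using v k(1) by auto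
  have "part_index V w = S k"
    using same_label vk(2) unfolding refined_label_def by simp
  then have "w \<in> V (S k)" using part_index_spec(2)[of w V N] k(2) cover_parts by simp
  moreover have "v k \<in> V (S k)" using part_index_spec(2)[of "v k" V N] vk cover_parts by simp
  ultimately have w_VS: "w \<in> ?VS" and v_VS: "v k \<in> ?VS" using k(1) by auto
  have "snd (refined_label p N V U w) S = snd (refined_label p N V U (v k)) S"
    using same_label by simp
  then have "part_index (U S) w = part_index (U S) (v k)"
    using S w_VS v_VS unfolding refined_label_def by simp
  moreover have "w \<in> U S (part_index (U S) w)"
    using part_index_spec(2)[of w "U S" "M' S"] w_VS cover_refined_parts[OF S] by simp
  ultimately show "w \<in> ?VS \<inter> (\<Union>k<p. U S (part_index (U S) (v k)))"
    using w_VS k(1) by auto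
qed

lemma refined_label_classes:
  assumes "hereditary D'" and v: "\<forall>k<p. v k \<in> verts G"
  shows "induced G {w \<in> verts G. \<exists>k<p. refined_label p N V U w = refined_label p N V U (v k)} \<in> D'"
proof -
  define S where "S = restrict (\<lambda>k. part_index V (v k)) {..<p}"
  define VS where "VS = (\<Union>k<p. V (S k))"
  define W where "W = (\<Union>k<p. U S (part_index (U S) (v k)))"
  define A where "A = {w \<in> verts G. \<exists>k<p. refined_label p N V U w = refined_label p N V U (v k)}"
  have v_part: "part_index V (v k) < N" "v k \<in> V (part_index V (v k))" if "k < p" for k
    using part_index_spec[of "v k" V N] v that cover_parts by simp_all
  have S: "S \<in> {..<p} \<rightarrow>\<^sub>E {..<N}" unfolding S_def by (simp add: v_part(1))
  have v_S: "\<forall>k<p. v k \<in> verts G \<and> part_index V (v k) = S k" using v by (simp add: S_def)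
  have "v k \<in> VS" if "k < p" for k
  proof -
    have "v k \<in> V (S k)" using v_part(2)[OF that] v_S that by simp
    then show ?thesis using that unfolding VS_def by blast
  qed
  then have index_bound: "\<forall>k<p. part_index (U S) (v k) < M' S"
    using part_index_spec(1)[of _ "U S" "M' S"] cover_refined_parts[OF S] by (simp add: VS_def)
  have "induced (induced G VS) (\<Union>k<p. U S (idx k)) \<in> D'" if "\<forall>k<p. idx k < M' S" for idx
    using dec_U[OF S] that by (simp add: decomposition_def VS_def)
  then have "induced (induced G VS) W \<in> D'" unfolding W_def using index_bound .
  then have "induced (induced (induced G VS) W) A \<in> D'"
    by (rule hereditary_induced[OF \<open>hereditary D'\<close>])
  moreover have "A \<subseteq> VS \<inter> W"
    unfolding A_def VS_def W_def by (rule refined_label_class_subset[OF S v_S])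
  then have "VS \<inter> W \<inter> A = A" by blast
  ultimately show ?thesis unfolding A_def by simp
qed

end

lemma decomposition_refine:
  assumes "hereditary D'" and dec: "decomposition p D G N V"
    and sub: "\<And>idx. \<forall>k<p. idx k < N \<Longrightarrow>
        \<exists>N' U. N' \<le> M \<and> decomposition p D' (induced G (\<Union>k<p. V (idx k))) N' U"
  shows "\<exists>N' W. N' \<le> N * (M + 1) ^ (N ^ p) \<and> decomposition p D' G N' W"
proof -
  let ?T = "{..<p} \<rightarrow>\<^sub>E {..<N}"
  let ?B = "{..<N} \<times> (?T \<rightarrow>\<^sub>E {..M})"
  have "\<exists>N' U. N' \<le> M \<and> decomposition p D' (induced G (\<Union>k<p. V (S k))) N' U"
    if "S \<in> ?T" for S
  proof -
    have "\<forall>k<p. S k < N" using that by auto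
    then show ?thesis by (rule sub)
  qed
  then obtain M' U where U: "\<And>S. S \<in> ?T \<Longrightarrow>
      M' S \<le> M \<and> decomposition p D' (induced G (\<Union>k<p. V (S k))) (M' S) (U S)"
    by metis
  let ?L = "refined_label p N V U ` verts G"
  have range: "?L \<subseteq> ?B" using refined_label_range[OF dec conjunct2[OF U] conjunct1[OF U]] .
  have "finite ?B" by (simp add: finite_PiE)
  then have "finite ?L" using range by (rule finite_subset[rotated])
  then obtain W where "decomposition p D' G (card ?L) W"
    using decomposition_by_labels[OF _ refined_label_classes[OF dec conjunct2[OF U] \<open>hereditary D'\<close>]]
    by blast
  moreover have "card ?L \<le> N * (M + 1) ^ (N ^ p)"
    using card_mono[OF \<open>finite ?B\<close> range] by (simp add: card_PiE card_cartesian_product finite_PiE)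
  ultimately show ?thesis by blast
qed

lemma decomposition_compose:
  assumes hD': "hereditary D'" and hC: "hereditary C" and "mono f"
    and C_dec: "\<forall>G\<in>C. \<exists>N V. N \<le> c \<and> decomposition p D G N V"
    and D_dec: "\<forall>H\<in>D. \<exists>N V. N \<le> f (card (verts H)) \<and> decomposition p D' H N V"
  shows "\<forall>G\<in>C. \<exists>N V. N \<le> c * (f (card (verts G)) + 1) ^ (c ^ p) \<and> decomposition p D' G N V"
proof
  fix G assume G: "G \<in> C"
  let ?M = "f (card (verts G))"
  obtain N V where "N \<le> c" and dec: "decomposition p D G N V" using C_dec G by blast
  have "\<exists>N' U. N' \<le> ?M \<and> decomposition p D' (induced G (\<Union>k<p. V (idx k))) N' U"
    if "\<forall>k<p. idx k < N" for idx
  proof -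
    let ?H = "induced G (\<Union>k<p. V (idx k))"
    have "?H \<in> D" using dec that by (simp add: decomposition_def)
    then obtain N' U where "N' \<le> f (card (verts ?H))" "decomposition p D' ?H N' U"
      using D_dec by blast
    moreover have "finite (verts G)" using hC G by (simp add: hereditary_def wf_graph_def)
    then have "card (verts ?H) \<le> card (verts G)" by (simp add: card_mono)
    ultimately show ?thesis using \<open>mono f\<close> by (meson le_trans monoD)
  qed
  then obtain N' W where "N' \<le> N * (?M + 1) ^ (N ^ p)" "decomposition p D' G N' W"
    using decomposition_refine[OF hD' dec] by blast
  moreover have "N * (?M + 1) ^ (N ^ p) \<le> c * (?M + 1) ^ (c ^ p)"
    using \<open>N \<le> c\<close> by (intro mult_le_mono power_increasing power_mono) auto
  ultimately show "\<exists>N V. N \<le> c * (?M + 1) ^ (c ^ p) \<and> decomposition p D' G N V"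
    using le_trans by blast
qed

lemma has_decomp_compose:
  assumes "hereditary_class_property P" "hereditary C" "mono f"
    and "has_decomp {D} C (\<lambda>_. c) p" "has_decomp P D f p"
  shows "has_decomp P C (\<lambda>n. c * (f n + 1) ^ (c ^ p)) p"
  using assms decomposition_compose[of _ C f c p D]
  unfolding has_decomp_iff_decomposition hereditary_class_property_def by blast

lemma eventually_le_powr_sequentially:
  fixes A \<epsilon> :: real
  assumes "\<epsilon> > 0"
  shows "\<forall>\<^sub>F n in sequentially. A \<le> real n powr \<epsilon>"
proof -
  define B where "B = max A 1"
  have "A \<le> real n powr \<epsilon>" if "nat \<lceil>B powr (1/\<epsilon>)\<rceil> \<le> n" for n
  proof -
    have "B powr (1/\<epsilon>) \<le> real n" using that by linarith
    have "A \<le> (B powr (1/\<epsilon>)) powr \<epsilon>" using assms by (simp add: B_def powr_powr)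
    also have "\<dots> \<le> real n powr \<epsilon>"
      using \<open>B powr (1/\<epsilon>) \<le> real n\<close> assms by (intro powr_mono2) auto
    finally show ?thesis .
  qed
  then show ?thesis unfolding eventually_sequentially by blast
qed

lemma subpoly_const: "subpoly (\<lambda>_. c)"
  unfolding subpoly_def by (blast intro: eventually_le_powr_sequentially)

lemma subpoly_add:
  assumes "subpoly f" "subpoly g"
  shows "subpoly (\<lambda>n. f n + g n)"
  unfolding subpoly_def
proof (intro allI impI)
  fix \<epsilon> :: real assume "\<epsilon> > 0"
  then have "\<forall>\<^sub>F n in sequentially. real (f n) \<le> real n powr (\<epsilon>/2)"
    and "\<forall>\<^sub>F n in sequentially. real (g n) \<le> real n powr (\<epsilon>/2)"
    and "\<forall>\<^sub>F n in sequentially. 2 \<le> real n powr (\<epsilon>/2)"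
    using assms by (auto simp: subpoly_def intro: eventually_le_powr_sequentially)
  then show "\<forall>\<^sub>F n in sequentially. real (f n + g n) \<le> real n powr \<epsilon>"
  proof eventually_elim
    case (elim n)
    then have "real (f n + g n) \<le> 2 * real n powr (\<epsilon>/2)" by simp
    also have "\<dots> \<le> real n powr (\<epsilon>/2) * real n powr (\<epsilon>/2)"
      using elim(3) by (intro mult_right_mono) auto
    also have "\<dots> = real n powr \<epsilon>" by (simp flip: powr_add)
    finally show ?case .
  qed
qed

lemma subpoly_mult:
  assumes "subpoly f" "subpoly g"
  shows "subpoly (\<lambda>n. f n * g n)"
  unfolding subpoly_def
proof (intro allI impI)
  fix \<epsilon> :: real assume "\<epsilon> > 0"
  then have "\<forall>\<^sub>F n in sequentially. real (f n) \<le> real n powr (\<epsilon>/2)"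
    and "\<forall>\<^sub>F n in sequentially. real (g n) \<le> real n powr (\<epsilon>/2)"
    using assms by (auto simp: subpoly_def)
  then show "\<forall>\<^sub>F n in sequentially. real (f n * g n) \<le> real n powr \<epsilon>"
  proof eventually_elim
    case (elim n)
    then have "real (f n * g n) \<le> real n powr (\<epsilon>/2) * real n powr (\<epsilon>/2)"
      by (simp add: mult_mono)
    also have "\<dots> = real n powr \<epsilon>" by (simp flip: powr_add)
    finally show ?case .
  qed
qed

lemma subpoly_power:
  assumes "subpoly f"
  shows "subpoly (\<lambda>n. f n ^ k)"
proof (induction k)
  case 0
  show ?case using subpoly_const[of 1] by simp
next
  case (Suc k)
  show ?case using subpoly_mult[OF assms Suc] by simp
qed

lemma plus_propD:
  assumes "C \<in> plus_prop Q"
  shows "hereditary C" and "p \<ge> 1 \<Longrightarrow> \<exists>c. has_decomp Q C (\<lambda>_. c) p"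
  using assms by (simp_all add: plus_prop_def)

lemma star_propD:
  assumes "C \<in> star_prop Q"
  shows "hereditary C" and "p \<ge> 1 \<Longrightarrow> \<exists>f. mono f \<and> subpoly f \<and> has_decomp Q C f p"
  using assms by (simp_all add: star_prop_def)

lemma subset_plus_prop:
  assumes "\<forall>C\<in>Q. hereditary C"
  shows "Q \<subseteq> plus_prop Q"
proof
  fix C assume C: "C \<in> Q"
  have "has_decomp Q C (\<lambda>_. 1) p" if "p \<ge> 1" for p
  proof -
    have "decomposition p C G 1 (\<lambda>_. verts G)" if "G \<in> C" for G
      using decomposition_single_part \<open>p \<ge> 1\<close> that C assms by (simp add: hereditary_def)
    then show ?thesis using C unfolding has_decomp_iff_decomposition by (intro bexI[of _ C]) auto
  qed
  then show "C \<in> plus_prop Q" using C assms unfolding plus_prop_def by blast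
qed

lemma plus_prop_plus_prop_subset:
  assumes "hereditary_class_property P"
  shows "plus_prop (plus_prop P) \<subseteq> plus_prop P"
proof
  fix C assume C: "C \<in> plus_prop (plus_prop P)"
  have "\<exists>c. has_decomp P C (\<lambda>_. c) p" if p: "p \<ge> 1" for p
  proof -
    obtain c D where D: "D \<in> plus_prop P" and C_dec: "has_decomp {D} C (\<lambda>_. c) p"
      using plus_propD(2)[OF C p] has_decomp_iff_singleton by blast
    obtain c' where "has_decomp P D (\<lambda>_. c') p" using plus_propD(2)[OF D p] by blast
    then have "has_decomp P C (\<lambda>_. c * (c' + 1) ^ (c ^ p)) p"
      using has_decomp_compose[OF assms plus_propD(1)[OF C] _ C_dec] by (simp add: mono_def)
    then show ?thesis ..
  qed
  then show "C \<in> plus_prop P" using plus_propD(1)[OF C] unfolding plus_prop_def by blast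
qed

lemma plus_prop_star_prop_subset:
  assumes "hereditary_class_property P"
  shows "plus_prop (star_prop P) \<subseteq> star_prop P"
proof
  fix C assume C: "C \<in> plus_prop (star_prop P)"
  have "\<exists>g. mono g \<and> subpoly g \<and> has_decomp P C g p" if p: "p \<ge> 1" for p
  proof -
    obtain c D where D: "D \<in> star_prop P" and C_dec: "has_decomp {D} C (\<lambda>_. c) p"
      using plus_propD(2)[OF C p] has_decomp_iff_singleton by blast
    obtain f where f: "mono f" "subpoly f" "has_decomp P D f p" using star_propD(2)[OF D p] by blast
    have "has_decomp P C (\<lambda>n. c * (f n + 1) ^ (c ^ p)) p"
      using has_decomp_compose[OF assms plus_propD(1)[OF C] f(1) C_dec f(3)] .
    moreover have "mono (\<lambda>n. c * (f n + 1) ^ (c ^ p))"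
    proof (rule monoI)
      fix m n :: nat assume "m \<le> n"
      then have "f m + 1 \<le> f n + 1" using monoD[OF f(1)] by simp
      then show "c * (f m + 1) ^ (c ^ p) \<le> c * (f n + 1) ^ (c ^ p)" by (simp add: power_mono)
    qed
    moreover have "subpoly (\<lambda>n. c * (f n + 1) ^ (c ^ p))"
      using subpoly_mult[OF subpoly_const subpoly_power[OF subpoly_add[OF f(2) subpoly_const]]] .
    ultimately show ?thesis by blast
  qed
  then show "C \<in> star_prop P" using plus_propD(1)[OF C] unfolding star_prop_def by blast
qed

theorem mainTheorem8:
  assumes "hereditary_class_property P"
  shows "plus_prop (plus_prop P) = plus_prop P \<and> plus_prop (star_prop P) = star_prop P"
proof -
  have "\<forall>C\<in>plus_prop P. hereditary C" "\<forall>C\<in>star_prop P. hereditary C"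
    using plus_propD(1) star_propD(1) by blast+
  then show ?thesis
    using plus_prop_plus_prop_subset[OF assms] plus_prop_star_prop_subset[OF assms]
    by (simp add: subset_antisym subset_plus_prop)
qed

end
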